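(* Let $(D, \{ \prec_\alpha, \succ_\alpha, \curlyvee_{\alpha, \beta} \}_{\alpha, \beta \in \Omega})$ be an NS-family algebra. Then $(D, \{ \ast_{\alpha, \beta} \}_{\alpha, \beta \in \Omega})$ is an $\Omega$-associative algebra, where $x \ast_{\alpha, \beta} y = x \prec_\beta y + x \succ_\alpha y + x \curlyvee_{\alpha, \beta} y$.
   Context: $\Omega$ is a semigroup. An NS-family algebra is a vector space $D$ with bilinear maps $\{ \prec_\alpha, \succ_\alpha, \curlyvee_{\alpha, \beta}\}_{\alpha, \beta \in \Omega}$ such that for all $x,y,z$, $\alpha,\beta,\gamma$: (1) $(x \prec_\alpha y) \prec_\beta z = x \prec_{\alpha \beta} ( y \prec_\beta z + y \succ_\alpha z + y \curlyvee_{\alpha, \beta} z)$; (2) $(x \succ_\alpha y) \prec_\beta z = x \succ_\alpha (y \prec_\beta z)$; (3) $(x \prec_\beta y + x \succ_\alpha y + x \curlyvee_{\alpha, \beta} y) \succ_{\alpha \beta} z = x \succ_\alpha (y \succ_\beta z)$; (4) $( x \prec_\beta y + x \succ_\alpha y + x \curlyvee_{\alpha, \beta} y ) \curlyvee_{\alpha \beta, \gamma} z + (x \curlyvee_{\alpha, \beta} y) \prec_\gamma z = x \succ_\alpha (y \curlyvee_{\beta, \gamma} z) + x \curlyvee_{\alpha, \beta \gamma} ( y \prec_\gamma z + y \succ_\beta z + y \curlyvee_{\beta, \gamma} z )$. An $\Omega$-associative algebra is a vector space $B$ with bilinear maps $\{\cdot_{\alpha,\beta}\}_{\alpha,\beta\in\Omega}$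 such that $(a \cdot_{\alpha , \beta} b) \cdot_{\alpha \beta, \gamma} c = a \cdot_{\alpha, \beta \gamma} (b \cdot_{\beta, \gamma} c)$ for all $a,b,c\in B$, $\alpha,\beta,\gamma\in\Omega$. *)

theory Defs
  imports "HOL-Analysis.Analysis"
begin

definition bilinear_map :: "('k::field \<Rightarrow> 'v::ab_group_add \<Rightarrow> 'v) \<Rightarrow> ('v \<Rightarrow> 'v \<Rightarrow> 'v) \<Rightarrow> bool" where
  "bilinear_map smul m \<longleftrightarrow>
     (\<forall>x y z. m (x + y) z = m x z + m y z) \<and>
     (\<forall>x y z. m x (y + z) = m x y + m x z) \<and>
     (\<forall>c x y. m (smul c x) y = smul c (m x y)) \<and>
     (\<forall>c x y. m x (smul c y) = smul c (m x y))"

definition NS_family_algebra ::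
  "('k::field \<Rightarrow> 'v::ab_group_add \<Rightarrow> 'v)
   \<Rightarrow> ('o::semigroup_mult \<Rightarrow> 'v \<Rightarrow> 'v \<Rightarrow> 'v)
   \<Rightarrow> ('o \<Rightarrow> 'v \<Rightarrow> 'v \<Rightarrow> 'v)
   \<Rightarrow> ('o \<Rightarrow> 'o \<Rightarrow> 'v \<Rightarrow> 'v \<Rightarrow> 'v) \<Rightarrow> bool" where
  "NS_family_algebra smul prec succ curly \<longleftrightarrow>
     vector_space smul \<and>
     (\<forall>a. bilinear_map smul (prec a)) \<and>
     (\<forall>a. bilinear_map smul (succ a)) \<and>
     (\<forall>a b. bilinear_map smul (curly a b)) \<and>
     (\<forall>x y z a b. prec b (prec a x y) z
        = prec (a * b) x (prec b y z + succ a y z + curly a b y z)) \<and>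
     (\<forall>x y z a b. prec b (succ a x y) z = succ a x (prec b y z)) \<and>
     (\<forall>x y z a b. succ (a * b) (prec b x y + succ a x y + curly a b x y) z
        = succ a x (succ b y z)) \<and>
     (\<forall>x y z a b c.
        curly (a * b) c (prec b x y + succ a x y + curly a b x y) z + prec c (curly a b x y) z
        = succ a x (curly b c y z) + curly a (b * c) x (prec c y z + succ b y z + curly b c y z))"

definition Omega_associative_algebra ::
  "('k::field \<Rightarrow> 'v::ab_group_add \<Rightarrow> 'v) \<Rightarrow> ('o::semigroup_mult \<Rightarrow> 'o \<Rightarrow> 'v \<Rightarrow> 'v \<Rightarrow> 'v) \<Rightarrow> bool" where
  "Omega_associative_algebra smul dot \<longleftrightarrow>
     vector_space smul \<and>
     (\<forall>a b. bilinear_map smul (dot a b)) \<and>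
     (\<forall>x y z a b c. dot (a * b) c (dot a b x y) z = dot a (b * c) x (dot b c y z))"

end

theory Submission
  imports Defs
begin

text \<open>Expand \<open>(x * y) * z\<close> with \<open>x * y = x \<prec> y + x \<succ> y + x \<curlyvee> y\<close>
  (indices suppressed). Axioms (1) and (2) turn \<open>(x * y) \<prec> z\<close> into
  \<open>x \<prec> (y * z) + x \<succ> (y \<prec> z) + (x \<curlyvee> y) \<prec> z\<close>, axiom (3) turns
  \<open>(x * y) \<succ> z\<close> into \<open>x \<succ> (y \<succ> z)\<close>, and axiom (4) trades the leftover
  \<open>(x \<curlyvee> y) \<prec> z\<close> together with \<open>(x * y) \<curlyvee> z\<close> for
  \<open>x \<succ> (y \<curlyvee> z) + x \<curlyvee> (y * z)\<close>. By additivity of \<open>x \<succ> _\<close> the sum is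
  \<open>x * (y * z)\<close>.\<close>

definition ns_product ::
  "('o::semigroup_mult \<Rightarrow> 'v::ab_group_add \<Rightarrow> 'v \<Rightarrow> 'v) \<Rightarrow> ('o \<Rightarrow> 'v \<Rightarrow> 'v \<Rightarrow> 'v)
   \<Rightarrow> ('o \<Rightarrow> 'o \<Rightarrow> 'v \<Rightarrow> 'v \<Rightarrow> 'v) \<Rightarrow> 'o \<Rightarrow> 'o \<Rightarrow> 'v \<Rightarrow> 'v \<Rightarrow> 'v" where
  "ns_product prec succ curly a b x y = prec b x y + succ a x y + curly a b x y"

lemma bilinear_map_add:
  assumes "vector_space smul" and "bilinear_map smul f" and "bilinear_map smul g"
  shows "bilinear_map smul (\<lambda>x y. f x y + g x y)"
  using assms unfolding bilinear_map_def vector_space_def module_def by (simp add: algebra_simps)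

lemma bilinear_map_add_left:
  "bilinear_map smul f \<Longrightarrow> f (x + y) z = f x z + f y z"
  unfolding bilinear_map_def by blast

lemma bilinear_map_add_right:
  "bilinear_map smul f \<Longrightarrow> f x (y + z) = f x y + f x z"
  unfolding bilinear_map_def by blast

lemma ns_product_bilinear:
  assumes "NS_family_algebra smul prec succ curly"
  shows "bilinear_map smul (ns_product prec succ curly a b)"
proof -
  have "vector_space smul" and "bilinear_map smul (prec b)"
    and "bilinear_map smul (succ a)" and "bilinear_map smul (curly a b)"
    using assms unfolding NS_family_algebra_def by simp_all
  then show ?thesis
    unfolding ns_product_def[abs_def] by (intro bilinear_map_add)
qed

lemma ns_product_assoc:
  assumes "NS_family_algebra smul prec succ curly"
  shows "ns_product prec succ curly (a * b) c (ns_product prec succ curly a b x y) z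
       = ns_product prec succ curly a (b * c) x (ns_product prec succ curly b c y z)"
proof -
  let ?xy = "ns_product prec succ curly a b x y"
  let ?yz = "ns_product prec succ curly b c y z"
  have prec_bilinear: "bilinear_map smul (prec c)"
    and succ_bilinear: "bilinear_map smul (succ a)"
    and ax1: "prec c (prec b x y) z = prec (b * c) x ?yz"
    and ax2: "prec c (succ a x y) z = succ a x (prec c y z)"
    and ax3: "succ (a * b) ?xy z = succ a x (succ b y z)"
    and ax4: "curly (a * b) c ?xy z + prec c (curly a b x y) z
            = succ a x (curly b c y z) + curly a (b * c) x ?yz"
    using assms unfolding NS_family_algebra_def ns_product_def by simp_all
  have prec_part: "prec c ?xy z
      = prec (b * c) x ?yz + succ a x (prec c y z) + prec c (curly a b x y) z"
    unfolding ns_product_def[of prec succ curly a b x y]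
    by (simp add: bilinear_map_add_left[OF prec_bilinear] ax1 ax2)
  have succ_split: "succ a x ?yz
      = succ a x (prec c y z) + succ a x (succ b y z) + succ a x (curly b c y z)"
    unfolding ns_product_def[of prec succ curly b c y z]
    by (simp add: bilinear_map_add_right[OF succ_bilinear])
  show ?thesis
    using prec_part succ_split ax3 ax4
    unfolding ns_product_def[of prec succ curly "a * b"] ns_product_def[of prec succ curly a "b * c"]
    by (simp add: algebra_simps)
qed

theorem proposition4p2:
  fixes smul :: "'k::field \<Rightarrow> 'v::ab_group_add \<Rightarrow> 'v"
    and prec succ :: "'o::semigroup_mult \<Rightarrow> 'v \<Rightarrow> 'v \<Rightarrow> 'v"
    and curly :: "'o \<Rightarrow> 'o \<Rightarrow> 'v \<Rightarrow> 'v \<Rightarrow> 'v"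
  assumes "NS_family_algebra smul prec succ curly"
  shows "Omega_associative_algebra smul
           (\<lambda>a b x y. prec b x y + succ a x y + curly a b x y)"
proof -
  have product_eq: "(\<lambda>a b x y. prec b x y + succ a x y + curly a b x y) = ns_product prec succ curly"
    by (simp add: ns_product_def[abs_def])
  have "vector_space smul"
    using assms unfolding NS_family_algebra_def by simp
  then show ?thesis
    unfolding product_eq Omega_associative_algebra_def
    using ns_product_bilinear[OF assms] ns_product_assoc[OF assms] by simp
qed

end
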